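(* Let $Q=(V,T,U,D,s,R)$ be a left-extended queue grammar. Then there exists a context-free grammar $G=(\overline V,T,P,S)$ with $\{0,1,\#\}\subseteq \overline V$ such that $L(Q)=L(G,F)$, where $F=\{w\#w^R\mid w\in\{0,1\}^*\}$ and the finalizing alphabet is $W=\{0,1,\#\}$.
   Context: A left-extended queue grammar is a sextuple $Q=(V,T,U,D,s,R)$ where $V,U$ are alphabets with $V\cap U=\emptyset$, $T\subseteq V$, $D\subseteq U$, $s\in(V-T)(U-D)$, and $R\subseteq (V\times(U-D))\times(V^*\times U)$ is finite. Let $\#\notin V\cup U$. For $u,v\in V^*\{\#\}V^*U$, write $u\Rightarrow v$ if $u=w\#arb$, $v=wa\#rzc$ with $a\in V$, $r,z,w\in V^*$, $b,c\in U$ and $(a,b,z,c)\in R$; $\Rightarrow^*$ is its reflexive-transitive closure. $L(Q)=\{v\in T^*\mid \#s\Rightarrow^* w\#vf$ for some $w\in V^*$, $f\in D\}$. A context-free grammar $G=(V,T,P,S)$ has total alphabet $V$, terminals $T\subseteq V$, nonterminals $N=V-T$, finite rules $P\subseteq N\times V^*$, start $S\in N$; $\phi(G)=\{w\in V^*\mid S\Rightarrow^*w\}$. For $X\subseteq V$, $\pi_X$ is the homomorphism from $V^*$ to $X^*$ keeping symbols of $X$ and erasing the others. For $W\subseteq V$ and $F\subseteq W^*$, $\phi(G,F)=\{x\in\phi(G)\mid\pi_W(x)\in F\}$ and $L(G,F)=\{\pi_T(y)\mid y\in\phi(G,F),\ \pi_{N-W}(y)=\varepsilon\}$. $w^R$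 denotes the reversal of $w$. *)

theory Defs
  imports Main
begin

text \<open>A configuration w#arb is represented
  as the triple (w, a r, b): the part left of the marker, the part between the marker
  and the state symbol, and the state symbol.\<close>

definition leqg :: "'a set \<Rightarrow> 'a set \<Rightarrow> 'a set \<Rightarrow> 'a set \<Rightarrow> 'a \<times> 'a
                   \<Rightarrow> ('a \<times> 'a \<times> 'a list \<times> 'a) set \<Rightarrow> bool" where
  "leqg V T U D s R \<longleftrightarrow>
     finite V \<and> finite U \<and> V \<inter> U = {} \<and> T \<subseteq> V \<and> D \<subseteq> U \<and>
     fst s \<in> V - T \<and> snd s \<in> U - D \<and> finite R \<and>
     (\<forall>(a, b, z, c) \<in> R. a \<in> V \<and> b \<in> U - D \<and> set z \<subseteq> V \<and> c \<in> U)"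

definition leqg_step :: "('a \<times> 'a \<times> 'a list \<times> 'a) set
      \<Rightarrow> 'a list \<times> 'a list \<times> 'a \<Rightarrow> 'a list \<times> 'a list \<times> 'a \<Rightarrow> bool" where
  "leqg_step R u v \<longleftrightarrow>
     (\<exists>w a r b z c. u = (w, a # r, b) \<and> v = (w @ [a], r @ z, c) \<and> (a, b, z, c) \<in> R)"

definition leqg_lang :: "'a set \<Rightarrow> 'a set \<Rightarrow> 'a set \<Rightarrow> 'a set \<Rightarrow> 'a \<times> 'a
      \<Rightarrow> ('a \<times> 'a \<times> 'a list \<times> 'a) set \<Rightarrow> 'a list set" where
  "leqg_lang V T U D s R =
     {v. set v \<subseteq> T \<and> (\<exists>w f. f \<in> D \<and> set w \<subseteq> V \<and>
          (leqg_step R)\<^sup>*\<^sup>* ([], [fst s], snd s) (w, v, f))}"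

definition cfg :: "'b set \<Rightarrow> 'b set \<Rightarrow> ('b \<times> 'b list) set \<Rightarrow> 'b \<Rightarrow> bool" where
  "cfg Vb Tb P S \<longleftrightarrow> finite Vb \<and> Tb \<subseteq> Vb \<and> finite P \<and>
     (\<forall>(A, \<alpha>) \<in> P. A \<in> Vb - Tb \<and> set \<alpha> \<subseteq> Vb) \<and> S \<in> Vb - Tb"

definition cfg_step :: "('b \<times> 'b list) set \<Rightarrow> 'b list \<Rightarrow> 'b list \<Rightarrow> bool" where
  "cfg_step P u v \<longleftrightarrow> (\<exists>x y A \<alpha>. u = x @ [A] @ y \<and> (A, \<alpha>) \<in> P \<and> v = x @ \<alpha> @ y)"

definition sent_forms :: "('b \<times> 'b list) set \<Rightarrow> 'b \<Rightarrow> 'b list set" where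
  "sent_forms P S = {w. (cfg_step P)\<^sup>*\<^sup>* [S] w}"

definition proj :: "'b set \<Rightarrow> 'b list \<Rightarrow> 'b list" where
  "proj X w = filter (\<lambda>x. x \<in> X) w"

definition sent_forms_ctrl :: "('b \<times> 'b list) set \<Rightarrow> 'b \<Rightarrow> 'b set \<Rightarrow> 'b list set \<Rightarrow> 'b list set" where
  "sent_forms_ctrl P S W F = {x \<in> sent_forms P S. proj W x \<in> F}"

definition cfg_lang_ctrl :: "'b set \<Rightarrow> 'b set \<Rightarrow> ('b \<times> 'b list) set \<Rightarrow> 'b
      \<Rightarrow> 'b set \<Rightarrow> 'b list set \<Rightarrow> 'b list set" where
  "cfg_lang_ctrl Vb Tb P S W F =
     {proj Tb y | y. y \<in> sent_forms_ctrl P S W F \<and> proj ((Vb - Tb) - W) y = []}"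

text \<open>Symbols of G: the terminals of Q (embedded via Tm), the three distinguished
  symbols 0, 1, # and an unbounded supply of auxiliary symbols.\<close>
datatype 'a gsym = Tm 'a | Zero | One | Hash | Aux "nat \<times> 'a list"

definition Wfin :: "'a gsym set" where
  "Wfin = {Zero, One, Hash}"

definition Fctrl :: "'a gsym list set" where
  "Fctrl = {w @ [Hash] @ rev w | w. set w \<subseteq> {Zero, One}}"

end

theory Submission
  imports Defs
begin

text \<open>
  G simulates Q in sentential forms  code(W) State_b rev(code(s1 Z)):  to the left of the
  state nonterminal it writes, in a unary-binary code, the sequence W of symbols Q has read
  from its queue, and to the right, mirrored, the sequence s1 Z of all symbols ever put into
  the queue.  Once Q is in a final state, the nonterminal Tail emits the codes of the remaining
  queue content q, each followed by the symbol itself if it is a terminal, and finally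
  becomes #.  The control word w#rev(w) is then exactly the condition W q = s1 Z, i.e. that
  the symbols were read from the queue in the order they were written.

  For this to be sound, a step of Q must not read a symbol that it writes itself.  Therefore
  every appended word is closed by a padding symbol (None), which G matches on the left by
  a separate padding production; this keeps |W| <= |Z| in every derivation.
\<close>

fun somes :: "'a option list \<Rightarrow> 'a list" where
  "somes [] = []"
| "somes (None # xs) = somes xs"
| "somes (Some a # xs) = a # somes xs"

lemma somes_append [simp]: "somes (xs @ ys) = somes xs @ somes ys"
  by (induction xs rule: somes.induct) auto

lemma somes_map_Some [simp]: "somes (map Some xs) = xs"
  by (induction xs) auto

lemma somes_replicate_None [simp]: "somes (replicate k None) = []"
  by (induction k) auto

lemma set_somes: "set (somes xs) = {a. Some a \<in> set xs}"
  by (induction xs rule: somes.induct) auto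

lemma set_subset_somes: "set xs \<subseteq> insert None (Some ` set (somes xs))"
  by (induction xs rule: somes.induct) auto

lemma somes_eq_Cons_conv:
  "somes xs = a # ys \<Longrightarrow> \<exists>k xs'. xs = replicate k None @ Some a # xs' \<and> somes xs' = ys"
proof (induction xs rule: somes.induct)
  case (2 xs)
  then obtain k xs' where "xs = replicate k None @ Some a # xs'" "somes xs' = ys"
    by auto
  then show ?case
    by (intro exI[of _ "Suc k"] exI[of _ xs']) auto
next
  case (3 b xs)
  then show ?case
    by (intro exI[of _ 0] exI[of _ xs]) auto
qed simp

lemma append_eq_append_shorter:
  "xs @ ys = us @ vs \<Longrightarrow> length xs \<le> length us \<Longrightarrow> \<exists>ws. us = xs @ ws \<and> ys = ws @ vs"
  by (auto simp: append_eq_append_conv2)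

lemma append_Cons_eq_append_Cons:
  "u @ m # v = x @ a # w \<Longrightarrow> a \<notin> set u \<Longrightarrow> a \<notin> set v \<Longrightarrow> x = u \<and> a = m \<and> w = v"
proof (induction u arbitrary: x)
  case Nil
  then show ?case by (cases x) auto
next
  case (Cons b u)
  then show ?case by (cases x) auto
qed

definition unary :: "nat \<Rightarrow> 'a gsym list" where
  "unary n = replicate n One @ [Zero]"

lemma unary_prefix_eq: "unary m @ r = unary n @ r' \<Longrightarrow> m = n \<and> r = r'"
proof (induction m arbitrary: n)
  case 0
  then show ?case by (cases n) (auto simp: unary_def)
next
  case (Suc m)
  then show ?case by (cases n) (auto simp: unary_def)
qed

lemma concat_map_unary_inj:
  "(concat (map unary ms) :: 'a gsym list) = concat (map unary ns) \<Longrightarrow> ms = ns"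
proof (induction ms arbitrary: ns)
  case Nil
  then show ?case by (cases ns) (auto simp: unary_def)
next
  case (Cons m ms)
  then obtain n ns' where ns: "ns = n # ns'"
    by (cases ns) (auto simp: unary_def)
  with Cons.prems have
    "unary m @ concat (map unary ms) = (unary n @ concat (map unary ns') :: 'a gsym list)"
    by simp
  then have "m = n" "(concat (map unary ms) :: 'a gsym list) = concat (map unary ns')"
    by (auto dest: unary_prefix_eq)
  with Cons.IH ns show ?case
    by simp
qed

lemma set_unary [simp]: "x \<in> set (unary n) \<longleftrightarrow> x = Zero \<or> x = One \<and> 0 < n"
  by (auto simp: unary_def)

lemma in_Wfin_iff [simp]:
  "Zero \<in> Wfin" "One \<in> Wfin" "Hash \<in> Wfin" "Tm t \<notin> Wfin" "Aux p \<notin> Wfin"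
  by (simp_all add: Wfin_def)

lemma proj_Wfin_unary [simp]: "proj Wfin (unary n) = unary n"
  by (auto simp: unary_def proj_def)

lemma proj_Tm_unary [simp]: "proj (Tm ` T) (unary n) = []"
  by (auto simp: unary_def proj_def filter_empty_conv)

definition code_num :: "('a \<Rightarrow> nat) \<Rightarrow> 'a option \<Rightarrow> nat" where
  "code_num f x = (case x of None \<Rightarrow> 0 | Some a \<Rightarrow> Suc (f a))"

definition codes :: "('a \<Rightarrow> nat) \<Rightarrow> 'a option list \<Rightarrow> 'a gsym list" where
  "codes f xs = concat (map (unary \<circ> code_num f) xs)"

definition emits :: "('a \<Rightarrow> nat) \<Rightarrow> 'a option list \<Rightarrow> 'a gsym list" where
  "emits f xs = concat (map (\<lambda>x. unary (code_num f x) @ map Tm (somes [x])) xs)"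

lemma codes_simps [simp]:
  "codes f [] = []"
  "codes f (x # xs) = unary (code_num f x) @ codes f xs"
  "codes f (xs @ ys) = codes f xs @ codes f ys"
  by (simp_all add: codes_def)

lemma emits_simps [simp]:
  "emits f [] = []"
  "emits f (x # xs) = unary (code_num f x) @ map Tm (somes [x]) @ emits f xs"
  "emits f (xs @ ys) = emits f xs @ emits f ys"
  by (simp_all add: emits_def)

lemma set_codes: "set (codes f xs) \<subseteq> {Zero, One}"
  by (auto simp: codes_def unary_def)

lemma set_emits: "set (emits f xs) \<subseteq> {Zero, One} \<union> Tm ` set (somes xs)"
  by (induction xs rule: somes.induct) (auto simp: unary_def)

lemma set_codes_terminal: "set (codes f xs) \<subseteq> {Zero, One} \<union> range Tm"
  using set_codes by blast

lemma set_rev_codes_terminal: "set (rev (codes f xs)) \<subseteq> {Zero, One} \<union> range Tm"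
  using set_codes by auto

lemma set_emits_terminal: "set (emits f xs) \<subseteq> {Zero, One} \<union> range Tm"
  using set_emits by blast

lemma codes_inj:
  assumes "inj_on f V" "set xs \<subseteq> insert None (Some ` V)" "set ys \<subseteq> insert None (Some ` V)"
    and "codes f xs = codes f ys"
  shows "xs = ys"
proof -
  have "inj_on (code_num f) (set xs \<union> set ys)"
    using assms(1-3) by (auto simp: inj_on_def code_num_def split: option.splits)
  moreover have "map (code_num f) xs = map (code_num f) ys"
    using assms(4) by (intro concat_map_unary_inj) (simp add: codes_def)
  ultimately show ?thesis
    by (simp add: inj_on_map_eq_map)
qed

lemma proj_Nil [simp]: "proj X [] = []"
  by (simp add: proj_def)

lemma proj_append [simp]: "proj X (xs @ ys) = proj X xs @ proj X ys"
  by (simp add: proj_def)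

lemma proj_Cons: "proj X (x # xs) = (if x \<in> X then x # proj X xs else proj X xs)"
  by (simp add: proj_def)

lemma proj_rev [simp]: "proj X (rev xs) = rev (proj X xs)"
  by (simp add: proj_def rev_filter)

lemma proj_eq_Nil_iff: "proj X xs = [] \<longleftrightarrow> set xs \<inter> X = {}"
  by (auto simp: proj_def filter_empty_conv)

lemma proj_Wfin_codes [simp]: "proj Wfin (codes f xs) = codes f xs"
  by (induction xs) auto

lemma proj_Wfin_emits [simp]: "proj Wfin (emits f xs) = codes f xs"
  by (induction xs rule: somes.induct) (auto simp: proj_Cons)

lemma proj_Tm_codes [simp]: "proj (Tm ` T) (codes f xs) = []"
  by (induction xs) auto

lemma proj_Tm_emits:
  "set xs \<subseteq> insert None (Some ` T) \<Longrightarrow> proj (Tm ` T) (emits f xs) = map Tm (somes xs)"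
  by (induction xs rule: somes.induct) (auto simp: proj_Cons)

lemma append_Hash_rev_in_Fctrl_iff:
  assumes "set u \<subseteq> {Zero, One}" "set v \<subseteq> {Zero, One}"
  shows "u @ Hash # rev v \<in> Fctrl \<longleftrightarrow> u = v"
proof
  assume "u @ Hash # rev v \<in> Fctrl"
  then obtain w where w: "set w \<subseteq> {Zero, One}" "u @ Hash # rev v = w @ Hash # rev w"
    by (auto simp: Fctrl_def)
  have "Hash \<notin> set u" "Hash \<notin> set (rev v)" "Hash \<notin> set w" "Hash \<notin> set (rev w)"
    using assms w(1) by auto
  with w(2) show "u = v"
    by (simp add: append_Cons_eq_iff)
qed (use assms in \<open>auto simp: Fctrl_def\<close>)

lemma cfg_stepI: "(A, \<alpha>) \<in> P \<Longrightarrow> cfg_step P (u @ A # v) (u @ \<alpha> @ v)"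
  unfolding cfg_step_def by fastforce

lemma cfg_step_at_only_lhs:
  assumes "cfg_step P (u @ m # v) y" "set u \<inter> fst ` P = {}" "set v \<inter> fst ` P = {}"
  shows "\<exists>\<alpha>. (m, \<alpha>) \<in> P \<and> y = u @ \<alpha> @ v"
proof -
  obtain x A w \<alpha> where split: "u @ m # v = x @ A # w" and rule: "(A, \<alpha>) \<in> P"
    and y: "y = x @ \<alpha> @ w"
    using assms(1) by (auto simp: cfg_step_def)
  have "A \<notin> set u" "A \<notin> set v"
    using assms(2,3) rule by force+
  with split have "x = u \<and> A = m \<and> w = v"
    by (intro append_Cons_eq_append_Cons)
  with rule y show ?thesis
    by blast
qed

abbreviation Start :: "'a gsym" where "Start \<equiv> Aux (0, [])"
abbreviation Tail :: "'a gsym" where "Tail \<equiv> Aux (Suc 0, [])"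
abbreviation State :: "'a \<Rightarrow> 'a gsym" where "State b \<equiv> Aux (2, [b])"

locale coded_leqg =
  fixes V T U D :: "'a set" and s :: "'a \<times> 'a"
    and R :: "('a \<times> 'a \<times> 'a list \<times> 'a) set" and f :: "'a \<Rightarrow> nat"
  assumes leqg: "leqg V T U D s R" and inj_f: "inj_on f V"
begin

lemma rule_wf:
  assumes "(a, b, z, c) \<in> R"
  shows "a \<in> V \<and> b \<in> U - D \<and> set z \<subseteq> V \<and> c \<in> U"
proof -
  have "\<forall>(a, b, z, c) \<in> R. a \<in> V \<and> b \<in> U - D \<and> set z \<subseteq> V \<and> c \<in> U"
    using leqg unfolding leqg_def by blast
  from bspec[OF this assms] show ?thesis
    by simp
qed

text \<open>trace W Z b: a chain of rules of Q from the start state to b that reads the symbols W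
  (None for a padding step) and appends the words of Z, each followed by a padding None.
  Such a chain is a run of Q iff W q = s1 Z for some queue content q.\<close>

inductive trace :: "'a option list \<Rightarrow> 'a option list \<Rightarrow> 'a \<Rightarrow> bool" where
  init: "trace [] [] (snd s)"
| pad: "trace W Z b \<Longrightarrow> b \<in> U \<Longrightarrow> trace (W @ [None]) (Z @ [None]) b"
| rule: "trace W Z b \<Longrightarrow> (a, b, z, c) \<in> R \<Longrightarrow>
    trace (W @ [Some a]) (Z @ map Some z @ [None]) c"

lemma trace_length_le: "trace W Z b \<Longrightarrow> length W \<le> length Z"
  by (induction rule: trace.induct) auto

lemma trace_symbols:
  "trace W Z b \<Longrightarrow>
     set W \<subseteq> insert None (Some ` V) \<and> set Z \<subseteq> insert None (Some ` V) \<and> b \<in> U"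
proof (induction rule: trace.induct)
  case init
  then show ?case
    using leqg by (auto simp: leqg_def)
next
  case (rule W Z b a z c)
  then show ?case
    using rule_wf[OF rule.hyps(2)] by auto
qed auto

lemma trace_pads:
  "trace W Z b \<Longrightarrow> b \<in> U \<Longrightarrow> trace (W @ replicate k None) (Z @ replicate k None) b"
proof (induction k)
  case (Suc k)
  then have "trace ((W @ replicate k None) @ [None]) ((Z @ replicate k None) @ [None]) b"
    by (intro trace.pad) auto
  then show ?case
    by (simp add: replicate_append_same[symmetric])
qed simp

lemma reachable_imp_trace:
  "(leqg_step R)\<^sup>*\<^sup>* ([], [fst s], snd s) (w, v, b) \<Longrightarrow>
     \<exists>W Z q. trace W Z b \<and> W @ q = Some (fst s) # Z \<and> somes q = v"
proof (induction "(w, v, b)" arbitrary: w v b rule: rtranclp_induct)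
  case base
  show ?case
    by (intro exI[of _ "[]"] exI[of _ "[]"] exI[of _ "[Some (fst s)]"]) (auto intro: trace.init)
next
  case (step C)
  from step.hyps(2) obtain w0 a r b0 z where C: "C = (w0, a # r, b0)" and v: "v = r @ z"
    and rule: "(a, b0, z, b) \<in> R"
    unfolding leqg_step_def by blast
  obtain W Z q where trace: "trace W Z b0" and queue: "W @ q = Some (fst s) # Z"
    and "somes q = a # r"
    using step.hyps(3)[OF C] by blast
  then obtain k q' where q: "q = replicate k None @ Some a # q'" "somes q' = r"
    using somes_eq_Cons_conv[OF \<open>somes q = a # r\<close>] by blast
  have "b0 \<in> U"
    using rule_wf[OF rule] by simp
  \<comment> \<open>the k padding symbols in front of a are consumed by pad steps\<close>
  then have "trace (W @ replicate k None @ [Some a])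
      (Z @ replicate k None @ map Some z @ [None]) b"
    using trace.rule[OF trace_pads[OF trace] rule] by simp
  moreover have "(W @ replicate k None @ [Some a]) @ q' @ replicate k None @ map Some z @ [None]
      = Some (fst s) # Z @ replicate k None @ map Some z @ [None]"
    using queue q(1) by simp
  moreover have "somes (q' @ replicate k None @ map Some z @ [None]) = v"
    using q(2) v by simp
  ultimately show ?case
    by blast
qed

lemma trace_imp_reachable:
  "trace W Z b \<Longrightarrow> W @ q = Some (fst s) # Z \<Longrightarrow>
     (leqg_step R)\<^sup>*\<^sup>* ([], [fst s], snd s) (somes W, somes q, b)"
proof (induction arbitrary: q rule: trace.induct)
  case init
  then show ?case by simp
next
  case (pad W Z b)
  have "(W @ [None]) @ q = (Some (fst s) # Z) @ [None]"
    using pad.prems by simp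
  moreover have "length (W @ [None]) \<le> length (Some (fst s) # Z)"
    using trace_length_le[OF pad.hyps(1)] by simp
  ultimately obtain q' where "Some (fst s) # Z = (W @ [None]) @ q'" "q = q' @ [None]"
    by (blast dest: append_eq_append_shorter)
  with pad.IH[of "None # q'"] show ?case
    by simp
next
  case (rule W Z b a z c)
  have "(W @ [Some a]) @ q = (Some (fst s) # Z) @ map Some z @ [None]"
    using rule.prems by simp
  moreover have "length (W @ [Some a]) \<le> length (Some (fst s) # Z)"
    using trace_length_le[OF rule.hyps(1)] by simp
  ultimately obtain q' where q': "Some (fst s) # Z = (W @ [Some a]) @ q'"
    and q: "q = q' @ map Some z @ [None]"
    by (blast dest: append_eq_append_shorter)
  have "(leqg_step R)\<^sup>*\<^sup>* ([], [fst s], snd s) (somes W, a # somes q', b)"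
    using rule.IH[of "Some a # q'"] q' by simp
  moreover have "leqg_step R (somes W, a # somes q', b) (somes W @ [a], somes q' @ z, c)"
    using rule.hyps(2) unfolding leqg_step_def by blast
  ultimately show ?case
    using q by simp
qed

definition productions :: "('a gsym \<times> 'a gsym list) set" where
  "productions =
     {(Start, State (snd s) # rev (codes f [Some (fst s)]))}
   \<union> (\<lambda>b. (State b, codes f [None] @ State b # rev (codes f [None]))) ` U
   \<union> (\<lambda>(a, b, z, c).
        (State b, codes f [Some a] @ State c # rev (codes f (map Some z @ [None])))) ` R
   \<union> (\<lambda>b. (State b, [Tail])) ` D
   \<union> (\<lambda>x. (Tail, emits f [x] @ [Tail])) ` insert None (Some ` T)
   \<union> {(Tail, [Hash])}"

definition symbols :: "'a gsym set" where
  "symbols = {Zero, One, Hash, Start, Tail} \<union> State ` U \<union> Tm ` T"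

abbreviation derives :: "'a gsym list \<Rightarrow> 'a gsym list \<Rightarrow> bool" where
  "derives \<equiv> (cfg_step productions)\<^sup>*\<^sup>*"

lemma Start_productions:
  "(Start, \<alpha>) \<in> productions \<longleftrightarrow> \<alpha> = State (snd s) # rev (codes f [Some (fst s)])"
  by (auto simp: productions_def)

lemma State_productions:
  "(State b, \<alpha>) \<in> productions \<longleftrightarrow>
     b \<in> U \<and> \<alpha> = codes f [None] @ State b # rev (codes f [None])
   \<or> (\<exists>a z c. (a, b, z, c) \<in> R \<and>
        \<alpha> = codes f [Some a] @ State c # rev (codes f (map Some z @ [None])))
   \<or> b \<in> D \<and> \<alpha> = [Tail]"
  unfolding productions_def by (auto simp del: codes_simps emits_simps) force

lemma Tail_productions:
  "(Tail, \<alpha>) \<in> productions \<longleftrightarrow>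
     (\<exists>x \<in> insert None (Some ` T). \<alpha> = emits f [x] @ [Tail]) \<or> \<alpha> = [Hash]"
  unfolding productions_def by (auto simp del: codes_simps emits_simps)

lemma lhs_productions: "fst ` productions \<subseteq> {Start, Tail} \<union> State ` U"
  using leqg by (auto simp: productions_def leqg_def dest: rule_wf)

lemma lhs_not_terminal: "(A, \<alpha>) \<in> productions \<Longrightarrow> A \<notin> {Zero, One, Hash} \<union> range Tm"
  using lhs_productions by force

definition state_form :: "'a option list \<Rightarrow> 'a option list \<Rightarrow> 'a \<Rightarrow> 'a gsym list" where
  "state_form W Z b = codes f W @ State b # rev (codes f (Some (fst s) # Z))"

definition tail_form ::
  "'a option list \<Rightarrow> 'a option list \<Rightarrow> 'a option list \<Rightarrow> 'a gsym \<Rightarrow> 'a gsym list" where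
  "tail_form W q Z N = codes f W @ emits f q @ N # rev (codes f (Some (fst s) # Z))"

inductive sentential_shape :: "'a gsym list \<Rightarrow> bool" where
  start: "sentential_shape [Start]"
| state: "trace W Z b \<Longrightarrow> sentential_shape (state_form W Z b)"
| tail: "trace W Z b \<Longrightarrow> b \<in> D \<Longrightarrow> set q \<subseteq> insert None (Some ` T) \<Longrightarrow>
    N \<in> {Tail, Hash} \<Longrightarrow> sentential_shape (tail_form W q Z N)"

lemma cfg_step_at_nonterminal:
  assumes "cfg_step productions (u @ m # v) y"
    and "set u \<subseteq> {Zero, One} \<union> range Tm" "set v \<subseteq> {Zero, One} \<union> range Tm"
  shows "\<exists>\<alpha>. (m, \<alpha>) \<in> productions \<and> y = u @ \<alpha> @ v"
proof (rule cfg_step_at_only_lhs[OF assms(1)])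
  show "set u \<inter> fst ` productions = {}" "set v \<inter> fst ` productions = {}"
    using assms(2,3) lhs_not_terminal by fastforce+
qed

lemma sentential_shape_step:
  assumes "cfg_step productions y y'" and "sentential_shape y"
  shows "sentential_shape y'"
  using assms(2)
proof cases
  case start
  with assms(1) have "(Start, y') \<in> productions"
    using cfg_step_at_nonterminal[of "[]" Start "[]" y'] by auto
  then have "y' = state_form [] [] (snd s)"
    by (simp add: Start_productions state_form_def)
  then show ?thesis
    by (simp add: sentential_shape.state trace.init)
next
  case (state W Z b)
  have "cfg_step productions (codes f W @ State b # rev (codes f (Some (fst s) # Z))) y'"
    using assms(1) state(1) by (simp add: state_form_def)
  then obtain \<alpha> where "(State b, \<alpha>) \<in> productions"
    and y': "y' = codes f W @ \<alpha> @ rev (codes f (Some (fst s) # Z))"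
    using cfg_step_at_nonterminal set_codes_terminal set_rev_codes_terminal by blast
  then consider (pad) "b \<in> U" "\<alpha> = codes f [None] @ State b # rev (codes f [None])"
    | (rule) a z c where "(a, b, z, c) \<in> R"
        "\<alpha> = codes f [Some a] @ State c # rev (codes f (map Some z @ [None]))"
    | (final) "b \<in> D" "\<alpha> = [Tail]"
    unfolding State_productions by blast
  then show ?thesis
  proof cases
    case pad
    then have "y' = state_form (W @ [None]) (Z @ [None]) b"
      using y' by (simp add: state_form_def)
    then show ?thesis
      using state(2) pad(1) by (simp add: sentential_shape.state trace.pad)
  next
    case rule
    then have "y' = state_form (W @ [Some a]) (Z @ map Some z @ [None]) c"
      using y' by (simp add: state_form_def)
    then show ?thesis
      using state(2) rule(1) by (simp add: sentential_shape.state trace.rule)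
  next
    case final
    then have "y' = tail_form W [] Z Tail"
      using y' by (simp add: tail_form_def)
    then show ?thesis
      using state(2) final(1) by (simp add: sentential_shape.tail)
  qed
next
  case (tail W Z b q N)
  have "cfg_step productions
      ((codes f W @ emits f q) @ N # rev (codes f (Some (fst s) # Z))) y'"
    using assms(1) tail(1) by (simp add: tail_form_def)
  moreover have "set (codes f W @ emits f q) \<subseteq> {Zero, One} \<union> range Tm"
    using set_codes_terminal[of f W] set_emits_terminal[of f q] by auto
  ultimately obtain \<alpha> where rule: "(N, \<alpha>) \<in> productions"
    and y': "y' = (codes f W @ emits f q) @ \<alpha> @ rev (codes f (Some (fst s) # Z))"
    using cfg_step_at_nonterminal set_rev_codes_terminal by blast
  have "N = Tail"
    using tail(5) lhs_not_terminal[OF rule] by auto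
  with rule consider (emit) x where "x \<in> insert None (Some ` T)" "\<alpha> = emits f [x] @ [Tail]"
    | (hash) "\<alpha> = [Hash]"
    using Tail_productions by blast
  then show ?thesis
  proof cases
    case emit
    then have "y' = tail_form W (q @ [x]) Z Tail"
      using y' by (simp add: tail_form_def)
    then show ?thesis
      using tail(2-4) emit(1) by (simp add: sentential_shape.tail)
  next
    case hash
    then have "y' = tail_form W q Z Hash"
      using y' by (simp add: tail_form_def)
    then show ?thesis
      using tail(2-4) by (simp add: sentential_shape.tail)
  qed
qed

lemma sentential_shape_of_sent_forms: "y \<in> sent_forms productions Start \<Longrightarrow> sentential_shape y"
  unfolding sent_forms_def mem_Collect_eq
  by (induction rule: rtranclp_induct) (auto intro: sentential_shape.start sentential_shape_step)

lemma derives_state_form: "trace W Z b \<Longrightarrow> derives [Start] (state_form W Z b)"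
proof (induction rule: trace.induct)
  case init
  have "cfg_step productions ([] @ Start # []) ([] @ state_form [] [] (snd s) @ [])"
    by (rule cfg_stepI) (simp add: Start_productions state_form_def)
  then show ?case
    by simp
next
  case (pad W Z b)
  have "cfg_step productions (codes f W @ State b # rev (codes f (Some (fst s) # Z)))
      (codes f W @ (codes f [None] @ State b # rev (codes f [None]))
        @ rev (codes f (Some (fst s) # Z)))"
    by (rule cfg_stepI) (simp add: State_productions pad.hyps(2))
  then have "cfg_step productions (state_form W Z b) (state_form (W @ [None]) (Z @ [None]) b)"
    by (simp add: state_form_def)
  with pad.IH show ?case
    by (rule rtranclp.rtrancl_into_rtrancl)
next
  case (rule W Z b a z c)
  have "cfg_step productions (codes f W @ State b # rev (codes f (Some (fst s) # Z)))
      (codes f W @ (codes f [Some a] @ State c # rev (codes f (map Some z @ [None])))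
        @ rev (codes f (Some (fst s) # Z)))"
    by (rule cfg_stepI) (use rule.hyps(2) in \<open>auto simp: State_productions\<close>)
  then have "cfg_step productions (state_form W Z b)
      (state_form (W @ [Some a]) (Z @ map Some z @ [None]) c)"
    by (simp add: state_form_def)
  with rule.IH show ?case
    by (rule rtranclp.rtrancl_into_rtrancl)
qed

lemma derives_Tail:
  "set q \<subseteq> insert None (Some ` T) \<Longrightarrow> derives (u @ Tail # v) (u @ emits f q @ Tail # v)"
proof (induction q rule: rev_induct)
  case (snoc x q)
  have "cfg_step productions
      ((u @ emits f q) @ Tail # v) ((u @ emits f q) @ (emits f [x] @ [Tail]) @ v)"
    by (rule cfg_stepI, subst Tail_productions) (use snoc.prems in auto)
  with snoc show ?case
    by (auto intro: rtranclp.rtrancl_into_rtrancl)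
qed simp

lemma derives_final_form:
  assumes "trace W Z b" "b \<in> D" "set q \<subseteq> insert None (Some ` T)"
  shows "derives [Start] (tail_form W q Z Hash)"
proof -
  let ?w = "codes f W" and ?z = "rev (codes f (Some (fst s) # Z))"
  have "derives [Start] (?w @ State b # ?z)"
    using derives_state_form[OF assms(1)] by (simp add: state_form_def)
  also have "cfg_step productions \<dots> (?w @ [Tail] @ ?z)"
    by (rule cfg_stepI) (simp add: State_productions assms(2))
  also have "derives \<dots> ((?w @ emits f q) @ Tail # ?z)"
    using derives_Tail[OF assms(3)] by simp
  also have "cfg_step productions \<dots> ((?w @ emits f q) @ [Hash] @ ?z)"
    by (rule cfg_stepI) (simp add: Tail_productions)
  finally show ?thesis
    by (simp add: tail_form_def)
qed

lemma proj_Wfin_final_form: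
  "proj Wfin (tail_form W q Z Hash) = codes f (W @ q) @ Hash # rev (codes f (Some (fst s) # Z))"
  by (simp add: tail_form_def proj_Cons)

lemma proj_Tm_final_form:
  "set q \<subseteq> insert None (Some ` T) \<Longrightarrow>
     proj (Tm ` T) (tail_form W q Z Hash) = map Tm (somes q)"
  by (auto simp: tail_form_def proj_Tm_emits proj_Cons)

lemma final_form_no_leftover: "proj ((symbols - Tm ` T) - Wfin) (tail_form W q Z Hash) = []"
proof -
  have "set (tail_form W q Z Hash) \<subseteq> {Zero, One, Hash} \<union> range Tm"
    using set_codes_terminal[of f] set_emits_terminal[of f q] by (auto simp: tail_form_def)
  then show ?thesis
    by (auto simp: proj_eq_Nil_iff symbols_def)
qed

lemma final_form_in_Fctrl_iff:
  assumes "trace W Z b" "set q \<subseteq> insert None (Some ` T)"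
  shows "proj Wfin (tail_form W q Z Hash) \<in> Fctrl \<longleftrightarrow> W @ q = Some (fst s) # Z"
proof -
  have "T \<subseteq> V" "fst s \<in> V"
    using leqg by (auto simp: leqg_def)
  then have "set q \<subseteq> insert None (Some ` V)"
    using assms(2) by blast
  then have V: "set (W @ q) \<subseteq> insert None (Some ` V)"
    "set (Some (fst s) # Z) \<subseteq> insert None (Some ` V)"
    using trace_symbols[OF assms(1)] \<open>fst s \<in> V\<close> by auto
  have "proj Wfin (tail_form W q Z Hash) \<in> Fctrl \<longleftrightarrow>
      codes f (W @ q) = codes f (Some (fst s) # Z)"
    unfolding proj_Wfin_final_form by (rule append_Hash_rev_in_Fctrl_iff[OF set_codes set_codes])
  also have "\<dots> \<longleftrightarrow> W @ q = Some (fst s) # Z"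
    using codes_inj[OF inj_f V] by (auto simp del: codes_simps)
  finally show ?thesis .
qed

lemma final_form_if_no_leftover:
  assumes "sentential_shape y" "proj ((symbols - Tm ` T) - Wfin) y = []"
  obtains W Z b q where "trace W Z b" "b \<in> D" "set q \<subseteq> insert None (Some ` T)"
    "y = tail_form W q Z Hash"
proof -
  have absent: "x \<notin> set y" if "x \<in> (symbols - Tm ` T) - Wfin" for x
    using assms(2) that by (auto simp: proj_eq_Nil_iff)
  from assms(1) show ?thesis
  proof cases
    case start
    then show ?thesis
      using absent[of Start] by (auto simp: symbols_def)
  next
    case (state W Z b)
    then show ?thesis
      using absent[of "State b"] trace_symbols[of W Z b]
      by (auto simp: symbols_def state_form_def)
  next
    case (tail W Z b q N)
    then have "N = Hash"
      using absent[of Tail] by (auto simp: symbols_def tail_form_def)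
    with tail that show ?thesis
      by blast
  qed
qed

lemma leqg_lang_subset_ctrl:
  "map Tm ` leqg_lang V T U D s R \<subseteq> cfg_lang_ctrl symbols (Tm ` T) productions Start Wfin Fctrl"
proof
  fix u
  assume "u \<in> map Tm ` leqg_lang V T U D s R"
  then obtain v w g where u: "u = map Tm v" and v: "set v \<subseteq> T" and "g \<in> D"
    and "(leqg_step R)\<^sup>*\<^sup>* ([], [fst s], snd s) (w, v, g)"
    unfolding leqg_lang_def by blast
  then obtain W Z q where trace: "trace W Z g" and queue: "W @ q = Some (fst s) # Z"
    and "somes q = v"
    using reachable_imp_trace by blast
  then have q: "set q \<subseteq> insert None (Some ` T)"
    using set_subset_somes[of q] v by blast
  let ?y = "tail_form W q Z Hash"
  have "?y \<in> sent_forms_ctrl productions Start Wfin Fctrl"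
    using derives_final_form[OF trace \<open>g \<in> D\<close> q] final_form_in_Fctrl_iff[OF trace q]
      queue by (simp add: sent_forms_ctrl_def sent_forms_def)
  moreover have "proj (Tm ` T) ?y = u"
    using proj_Tm_final_form[OF q] u \<open>somes q = v\<close> by simp
  ultimately show "u \<in> cfg_lang_ctrl symbols (Tm ` T) productions Start Wfin Fctrl"
    using final_form_no_leftover unfolding cfg_lang_ctrl_def by blast
qed

lemma ctrl_subset_leqg_lang:
  "cfg_lang_ctrl symbols (Tm ` T) productions Start Wfin Fctrl \<subseteq> map Tm ` leqg_lang V T U D s R"
proof
  fix u
  assume "u \<in> cfg_lang_ctrl symbols (Tm ` T) productions Start Wfin Fctrl"
  then obtain y where u: "u = proj (Tm ` T) y" and "y \<in> sent_forms productions Start"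
    and F: "proj Wfin y \<in> Fctrl" and "proj ((symbols - Tm ` T) - Wfin) y = []"
    unfolding cfg_lang_ctrl_def sent_forms_ctrl_def by blast
  then obtain W Z b q where trace: "trace W Z b" and "b \<in> D"
    and q: "set q \<subseteq> insert None (Some ` T)" and y: "y = tail_form W q Z Hash"
    using final_form_if_no_leftover sentential_shape_of_sent_forms by blast
  then have "W @ q = Some (fst s) # Z"
    using F final_form_in_Fctrl_iff by blast
  then have "(leqg_step R)\<^sup>*\<^sup>* ([], [fst s], snd s) (somes W, somes q, b)"
    using trace_imp_reachable[OF trace] by blast
  moreover have "set (somes W) \<subseteq> V" "set (somes q) \<subseteq> T"
    using trace_symbols[OF trace] q by (auto simp: set_somes)
  ultimately have "somes q \<in> leqg_lang V T U D s R"
    using \<open>b \<in> D\<close> unfolding leqg_lang_def by blast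
  moreover have "u = map Tm (somes q)"
    using u y proj_Tm_final_form[OF q] by simp
  ultimately show "u \<in> map Tm ` leqg_lang V T U D s R"
    by blast
qed

lemma cfg_productions: "cfg symbols (Tm ` T) productions Start"
proof -
  have fin: "finite U" "finite T" "finite D" "finite R"
    using leqg finite_subset by (auto simp: leqg_def)
  have "snd s \<in> U"
    using leqg by (auto simp: leqg_def)
  then have rhs: "set \<alpha> \<subseteq> symbols" if "(A, \<alpha>) \<in> productions" for A \<alpha>
    using that unfolding productions_def
    by (auto simp: symbols_def dest!: rule_wf dest: set_codes[THEN subsetD])
  have lhs: "A \<in> symbols - Tm ` T" if "(A, \<alpha>) \<in> productions" for A \<alpha>
    using that lhs_productions by (force simp: symbols_def)
  have "\<forall>(A, \<alpha>) \<in> productions. A \<in> symbols - Tm ` T \<and> set \<alpha> \<subseteq> symbols"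
    using lhs rhs by blast
  moreover have "finite productions"
    unfolding productions_def using fin by simp
  moreover have "finite symbols" "Tm ` T \<subseteq> symbols" "Start \<in> symbols - Tm ` T"
    using fin by (auto simp: symbols_def)
  ultimately show ?thesis
    unfolding cfg_def by blast
qed

end

theorem lemma4:
  fixes V T U D :: "'a set" and s :: "'a \<times> 'a"
    and R :: "('a \<times> 'a \<times> 'a list \<times> 'a) set"
  assumes "leqg V T U D s R"
  shows "\<exists>(Vb :: 'a gsym set) P S.
           cfg Vb (Tm ` T) P S \<and> {Zero, One, Hash} \<subseteq> Vb \<and>
           map Tm ` leqg_lang V T U D s R = cfg_lang_ctrl Vb (Tm ` T) P S Wfin Fctrl"
proof -
  have "finite V"
    using assms by (simp add: leqg_def)
  then obtain f :: "'a \<Rightarrow> nat" where "inj_on f V"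
    using finite_imp_inj_to_nat_seg by blast
  then interpret coded_leqg V T U D s R f
    using assms by unfold_locales
  have "{Zero, One, Hash} \<subseteq> symbols"
    by (simp add: symbols_def)
  then show ?thesis
    using cfg_productions leqg_lang_subset_ctrl ctrl_subset_leqg_lang
    by (intro exI[of _ symbols] exI[of _ productions] exI[of _ Start] conjI equalityI)
qed

end
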